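(* Under the hypotheses below, let $X$ be a process as described, fix $\alpha>0$, and for $A\subset\mathbb R^d$ set $\mathrm{Cap}^\alpha_{(\mu_t)}(A):=\inf\{\mathbb E_{\delta_0\otimes\mu_0}\{e^{-\alpha D^{(2)}_G}\}:A\subset G,\ G\subset\mathbb R^d\text{ open}\}$, where $D^{(2)}_G:=\inf\{t\ge0:X_2(t)\in G\}$. Then $\mathrm{Cap}^\alpha_{(\mu_t)}$ is a Choquet capacity on $\mathbb R^d$ endowed with the norm topology, and it is tight.
   Context: Setting: coefficients $b(t,x,\nu)\in\mathbb R^d$, $a(t,x,\nu)$ symmetric nonnegative definite on $[0,\infty)\times\mathbb R^d\times\mathcal P(\mathbb R^d)$; $L_{t,\nu}f=\langle b(t,x,\nu),\nabla_xf\rangle+\frac12\sum a_{ij}(t,x,\nu)\partial_{x_i}\partial_{x_j}f$. $\mu=(\mu_t)_{t\ge0}\subset\mathcal P(\mathbb R^d)$ is a weakly continuous solution of the nonlinear Fokker–Planck equation $\partial_t\mu_t=L^*_{t,\mu_t}\mu_t$ (in the distributional sense, with Borel frozen coefficients $b^u(t,x)=b(t,x,\mu_t)$, $a^u(t,x)=a(t,x,\mu_t)$ locally integrable against $\mu_t dt$), $\mu_t=u(t,x)dx$ with $u$ jointly measurable, and the linearized hypotheses hold: for $N,r>0$, $\partial_{x_j}a^u_{ij},b^u\in L^2([0,N)\times B(0,r);u\,dt\,dx)$, $a^u$ uniformly elliptic and bounded on $[0,N)\times B(0,r)$, $uh\in L^\infty([0,N)\times\mathbb R^d)$ and $\sqrt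 uh\in L^2([0,N);H^1)$ for $h\in C_c^\infty(\mathbb R^d)$; uniqueness for the frozen linear equation among sub-probability solutions dominated by $u$ starting from $\mu_s$ (weakly right-continuous, vaguely left-continuous) and among weakly continuous probability solutions dominated by $cu$ with a given initial value; $u(t,\cdot)\to u(0,\cdot)$ in $L^1$ and $L^1$-continuity at $0$ of the dominated solutions started from a measure-separating family of densities. Under these hypotheses there exist $E\in\mathcal B([0,\infty)\times\mathbb R^d)$ with $\mu_s(\{x:(s,x)\in E\})=1$ for all $s\ge0$ and a conservative right process $X=(X_1,X_2)$ on $E$ with a.s. continuous paths, $X_1(t)=s+t$ a.s. under $\mathbb P_{s,x}$, and $\mathbb P_{s,\mu_s}\circ X_2(t)^{-1}=\mu_{s+t}$; $X$ is such a process, with $\mathbb P_{\delta_0\otimes\mu_0}=\int\mathbb P_{0,x}\mu_0(dx)$. A Choquet capacity on a topological space $F$ is a map $\mathrm{Cap}$ from all subsets of $F$ to $[0,\infty]$ with: $\mathrm{Cap}(K)<\infty$ for compact $K$; monotone; $\mathrm{Cap}(A_n)\uparrow\mathrm{Cap}(A)$ when $A_n\uparrow A$; $\mathrm{Cap}(K_n)\downarrow\mathrm{Cap}(A)$ when compact $K_n\downarrow A$. It is tight if there are compacts $K_n$ increasing with $\inf_n\mathrm{Cap}(F\setminus K_n)=0$. *)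

theory Defs
  imports "HOL-Probability.Probability"
begin

definition choquet_capacity :: "('a::topological_space set \<Rightarrow> ennreal) \<Rightarrow> bool" where
  "choquet_capacity Cap \<longleftrightarrow>
     (\<forall>K. compact K \<longrightarrow> Cap K < \<infinity>) \<and>
     (\<forall>A B. A \<subseteq> B \<longrightarrow> Cap A \<le> Cap B) \<and>
     (\<forall>An A. incseq An \<and> (\<Union>n. An n) = A \<longrightarrow>
        incseq (\<lambda>n. Cap (An n)) \<and> (\<lambda>n. Cap (An n)) \<longlonglongrightarrow> Cap A) \<and>
     (\<forall>Kn A. (\<forall>n. compact (Kn n)) \<and> decseq Kn \<and> (\<Inter>n. Kn n) = A \<longrightarrow>
        decseq (\<lambda>n. Cap (Kn n)) \<and> (\<lambda>n. Cap (Kn n)) \<longlonglongrightarrow> Cap A)"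

definition tight_capacity :: "('a::topological_space set \<Rightarrow> ennreal) \<Rightarrow> bool" where
  "tight_capacity Cap \<longleftrightarrow>
     (\<exists>Kn. (\<forall>n. compact (Kn n)) \<and> incseq Kn \<and> (INF n. Cap (UNIV - Kn n)) = 0)"

text \<open>First hitting time D_G = inf{t \<ge> 0 : X2(t) \<in> G}, valued in the extended reals
  (infimum of the empty set is +\<infinity>).\<close>
definition hitting_time :: "(real \<Rightarrow> 'w \<Rightarrow> 'a) \<Rightarrow> 'a set \<Rightarrow> 'w \<Rightarrow> ereal" where
  "hitting_time X2 G \<omega> = Inf {ereal t | t. 0 \<le> t \<and> X2 t \<omega> \<in> G}"

definition exp_neg :: "real \<Rightarrow> ereal \<Rightarrow> ennreal" where
  "exp_neg \<alpha> D = (if D = \<infinity> then 0 else ennreal (exp (- \<alpha> * real_of_ereal D)))"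

definition cap_alpha :: "real \<Rightarrow> 'w measure \<Rightarrow> (real \<Rightarrow> 'w \<Rightarrow> 'a::topological_space) \<Rightarrow> 'a set \<Rightarrow> ennreal" where
  "cap_alpha \<alpha> P X2 A = (INF G \<in> {G. open G \<and> A \<subseteq> G}. \<integral>\<^sup>+ \<omega>. exp_neg \<alpha> (hitting_time X2 G \<omega>) \<partial>P)"

definition weakly_continuous_flow :: "(real \<Rightarrow> 'a::euclidean_space measure) \<Rightarrow> bool" where
  "weakly_continuous_flow \<mu> \<longleftrightarrow>
     (\<forall>f::'a \<Rightarrow> real. continuous_on UNIV f \<and> bounded (range f) \<longrightarrow>
        continuous_on {0..} (\<lambda>t. \<integral>x. f x \<partial>\<mu> t))"

end

theory Submission
  imports Defs
begin

(* For open G and a path that is continuous on [0, oo), exp (-alpha D_G) is the supremum of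
   exp (-alpha q) over the rational times q >= 0 with X_2(q) in G. This rational-time version is
   measurable, so psi(G) = E exp (-alpha D_G) is an honest integral, and pointwise it is maxitive
   on unions and continuous along increasing unions. Hence psi is bounded, strongly subadditive
   and continuous from below on open sets, and its outer extension inf {psi(G) : A <= G open} is
   a Choquet capacity: continuity along increasing sets is the classical epsilon 2^-n argument
   driven by strong subadditivity, and along decreasing compacts it holds because these
   eventually enter every open neighbourhood of their intersection. For tightness, a continuous
   path stays in the ball of radius n up to time T once n is large, so the discount for leaving
   that ball is at most exp (-alpha T), and monotone convergence sends psi of the complements of
   the balls to 0. *)

section \<open>Outer capacities\<close>

definition outer_capacity :: "('a::topological_space set \<Rightarrow> ennreal) \<Rightarrow> 'a set \<Rightarrow> ennreal" where
  "outer_capacity \<psi> A = (INF G \<in> {G. open G \<and> A \<subseteq> G}. \<psi> G)"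

lemma outer_capacity_le: "open G \<Longrightarrow> A \<subseteq> G \<Longrightarrow> outer_capacity \<psi> A \<le> \<psi> G"
  unfolding outer_capacity_def by (rule INF_lower) simp

lemma outer_capacity_mono: "A \<subseteq> B \<Longrightarrow> outer_capacity \<psi> A \<le> outer_capacity \<psi> B"
  unfolding outer_capacity_def by (rule INF_superset_mono) auto

lemma outer_capacity_less_iff:
  "outer_capacity \<psi> A < c \<longleftrightarrow> (\<exists>G. open G \<and> A \<subseteq> G \<and> \<psi> G < c)"
  unfolding outer_capacity_def by (auto simp: INF_less_iff)

lemma decseq_compact_subset_open:
  fixes K :: "nat \<Rightarrow> 'a::t2_space set"
  assumes K: "\<And>n. compact (K n)" "decseq K" and G: "open G" "(\<Inter>n. K n) \<subseteq> G"
  obtains n where "K n \<subseteq> G"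
proof -
  have "K 0 \<subseteq> (\<Union>n. G \<union> - K n)"
    using G(2) by auto
  moreover have "open (G \<union> - K n)" for n
    using G(1) K(1) by (intro open_Un open_Compl compact_imp_closed)
  ultimately obtain N where N: "finite N" "K 0 \<subseteq> (\<Union>n\<in>N. G \<union> - K n)"
    by (metis compactE_image[OF K(1)[of 0]])
  define m where "m = Max (insert 0 N)"
  have "K m \<subseteq> K n" if "n \<in> insert 0 N" for n
    using decseqD[OF K(2)] N(1) that unfolding m_def by simp
  with N(2) have "K m \<subseteq> G"
    by blast
  then show thesis ..
qed

lemma outer_capacity_Inter_compact:
  fixes K :: "nat \<Rightarrow> 'a::t2_space set"
  assumes K: "\<And>n. compact (K n)" "decseq K"
  shows "outer_capacity \<psi> (\<Inter>n. K n) = (INF n. outer_capacity \<psi> (K n))"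
proof (rule antisym)
  show "outer_capacity \<psi> (\<Inter>n. K n) \<le> (INF n. outer_capacity \<psi> (K n))"
    by (intro INF_greatest outer_capacity_mono) blast
  show "(INF n. outer_capacity \<psi> (K n)) \<le> outer_capacity \<psi> (\<Inter>n. K n)"
    unfolding outer_capacity_def[of \<psi> "\<Inter>n. K n"]
  proof (rule INF_greatest, clarify)
    fix G assume "open G" "(\<Inter>n. K n) \<subseteq> G"
    then obtain n where "K n \<subseteq> G"
      using decseq_compact_subset_open[OF K] by blast
    then show "(INF n. outer_capacity \<psi> (K n)) \<le> \<psi> G"
      using \<open>open G\<close> by (intro INF_lower2[of n] outer_capacity_le) auto
  qed
qed

lemma sum_halves_le:
  assumes "0 \<le> e"
  shows "(\<Sum>k\<le>n. ennreal (e * (1/2) ^ Suc k)) \<le> ennreal e"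
proof -
  have "(\<Sum>k\<le>n. e * (1/2::real) ^ Suc k) = e * (1 - (1/2) ^ Suc n)"
    by (induction n) (simp_all add: field_simps)
  then have "(\<Sum>k\<le>n. ennreal (e * (1/2) ^ Suc k)) = ennreal (e * (1 - (1/2) ^ Suc n))"
    using assms by (subst sum_ennreal) auto
  also have "\<dots> \<le> ennreal e"
    using assms by (intro ennreal_leI mult_left_le) auto
  finally show ?thesis .
qed

context
  fixes \<psi> :: "'a::t2_space set \<Rightarrow> ennreal"
  assumes UNIV_finite: "\<psi> UNIV \<noteq> \<infinity>"
    and strongly_subadditive:
      "\<And>G H. open G \<Longrightarrow> open H \<Longrightarrow> \<psi> (G \<union> H) + \<psi> (G \<inter> H) \<le> \<psi> G + \<psi> H"
    and Union_incseq_le_SUP: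
      "\<And>G. (\<And>n. open (G n)) \<Longrightarrow> incseq G \<Longrightarrow> \<psi> (\<Union>n. G n) \<le> (SUP n. \<psi> (G n))"
begin

lemma outer_capacity_less_top: "outer_capacity \<psi> A < \<infinity>"
  using outer_capacity_le[of UNIV A \<psi>] UNIV_finite by (simp add: order_le_less_trans top.not_eq_extremum)

lemma outer_capacity_incseq_cover:
  assumes A: "incseq A"
    and G: "\<And>n. open (G n)" "\<And>n. A n \<subseteq> G n" "\<And>n. \<psi> (G n) \<le> outer_capacity \<psi> (A n) + d n"
  shows "\<psi> (\<Union>k\<le>n. G k) \<le> outer_capacity \<psi> (A n) + (\<Sum>k\<le>n. d k)"
proof (induction n)
  case 0
  then show ?case using G(3)[of 0] by simp
next
  case (Suc n)
  let ?H = "\<Union>k\<le>n. G k"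
  have H_open: "open ?H"
    using G(1) by auto
  have "A n \<subseteq> ?H \<inter> G (Suc n)"
    using G(2) incseqD[OF A, of n "Suc n"] by auto
  then have "outer_capacity \<psi> (A n) \<le> \<psi> (?H \<inter> G (Suc n))"
    using H_open G(1) by (intro outer_capacity_le) auto
  then have "\<psi> (?H \<union> G (Suc n)) + outer_capacity \<psi> (A n) \<le> \<psi> ?H + \<psi> (G (Suc n))"
    using strongly_subadditive[OF H_open G(1)] by (meson add_left_mono order_trans)
  also have "\<dots> \<le> (outer_capacity \<psi> (A n) + (\<Sum>k\<le>n. d k)) + (outer_capacity \<psi> (A (Suc n)) + d (Suc n))"
    by (intro add_mono Suc.IH G(3))
  finally show ?case
    using outer_capacity_less_top[of "A n"]
    by (auto simp: atMost_Suc Un_commute add_ac ennreal_add_left_cancel_le)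
qed

lemma outer_capacity_Union_incseq:
  assumes A: "incseq A"
  shows "outer_capacity \<psi> (\<Union>n. A n) = (SUP n. outer_capacity \<psi> (A n))"
proof (rule antisym)
  show "(SUP n. outer_capacity \<psi> (A n)) \<le> outer_capacity \<psi> (\<Union>n. A n)"
    by (intro SUP_least outer_capacity_mono) auto
  show "outer_capacity \<psi> (\<Union>n. A n) \<le> (SUP n. outer_capacity \<psi> (A n))"
  proof (rule ennreal_le_epsilon)
    fix e :: real assume "0 < e"
    define d where "d k = ennreal (e * (1/2) ^ Suc k)" for k
    have "outer_capacity \<psi> (A n) < outer_capacity \<psi> (A n) + d n" for n
      using outer_capacity_less_top[of "A n"] \<open>0 < e\<close>
      by (simp add: d_def ennreal_add_left_cancel_less top.not_eq_extremum)
    then have "\<exists>G. open G \<and> A n \<subseteq> G \<and> \<psi> G < outer_capacity \<psi> (A n) + d n" for n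
      by (simp add: outer_capacity_less_iff)
    then obtain G where G: "\<And>n. open (G n)" "\<And>n. A n \<subseteq> G n"
      "\<And>n. \<psi> (G n) \<le> outer_capacity \<psi> (A n) + d n"
      by (metis less_imp_le)
    define H where "H n = (\<Union>k\<le>n. G k)" for n
    have H_open: "open (H n)" for n
      using G(1) by (auto simp: H_def)
    have A_sub_H: "A n \<subseteq> H n" for n
      using G(2) by (auto simp: H_def)
    have "incseq H"
      unfolding H_def by (intro monoI UN_mono) auto
    have d_sum: "(\<Sum>k\<le>n. d k) \<le> ennreal e" for n
      unfolding d_def using \<open>0 < e\<close> by (intro sum_halves_le) simp
    have "outer_capacity \<psi> (\<Union>n. A n) \<le> \<psi> (\<Union>n. H n)"
      using H_open A_sub_H by (intro outer_capacity_le) auto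
    also have "\<dots> \<le> (SUP n. \<psi> (H n))"
      using H_open \<open>incseq H\<close> by (rule Union_incseq_le_SUP)
    also have "\<dots> \<le> (SUP n. outer_capacity \<psi> (A n)) + ennreal e"
    proof (rule SUP_least)
      fix n
      have "\<psi> (H n) \<le> outer_capacity \<psi> (A n) + (\<Sum>k\<le>n. d k)"
        unfolding H_def by (rule outer_capacity_incseq_cover[OF A G])
      also have "\<dots> \<le> (SUP n. outer_capacity \<psi> (A n)) + ennreal e"
        by (intro add_mono SUP_upper d_sum) simp
      finally show "\<psi> (H n) \<le> (SUP n. outer_capacity \<psi> (A n)) + ennreal e" .
    qed
    finally show "outer_capacity \<psi> (\<Union>n. A n) \<le> (SUP n. outer_capacity \<psi> (A n)) + ennreal e" .
  qed
qed

lemma choquet_capacity_outer_capacity: "choquet_capacity (outer_capacity \<psi>)"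
proof -
  have "incseq (\<lambda>n. outer_capacity \<psi> (A n))
      \<and> (\<lambda>n. outer_capacity \<psi> (A n)) \<longlonglongrightarrow> outer_capacity \<psi> (\<Union>n. A n)"
    if "incseq A" for A
  proof
    show inc: "incseq (\<lambda>n. outer_capacity \<psi> (A n))"
      using that by (auto simp: incseq_def intro!: outer_capacity_mono)
    show "(\<lambda>n. outer_capacity \<psi> (A n)) \<longlonglongrightarrow> outer_capacity \<psi> (\<Union>n. A n)"
      unfolding outer_capacity_Union_incseq[OF that] by (rule LIMSEQ_SUP[OF inc])
  qed
  moreover have "decseq (\<lambda>n. outer_capacity \<psi> (K n))
      \<and> (\<lambda>n. outer_capacity \<psi> (K n)) \<longlonglongrightarrow> outer_capacity \<psi> (\<Inter>n. K n)"
    if "\<And>n. compact (K n)" "decseq K" for K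
  proof
    show dec: "decseq (\<lambda>n. outer_capacity \<psi> (K n))"
      using that(2) by (auto simp: decseq_def intro!: outer_capacity_mono)
    show "(\<lambda>n. outer_capacity \<psi> (K n)) \<longlonglongrightarrow> outer_capacity \<psi> (\<Inter>n. K n)"
      unfolding outer_capacity_Inter_compact[OF that] by (rule LIMSEQ_INF[OF dec])
  qed
  ultimately show ?thesis
    unfolding choquet_capacity_def using outer_capacity_less_top outer_capacity_mono by blast
qed

end

lemma tight_capacity_outer_capacity:
  fixes K :: "nat \<Rightarrow> 'a::t2_space set"
  assumes K: "\<And>n. compact (K n)" "incseq K" and \<psi>: "(INF n. \<psi> (UNIV - K n)) = 0"
  shows "tight_capacity (outer_capacity \<psi>)"
  unfolding tight_capacity_def
proof (intro exI conjI)
  have "(INF n. outer_capacity \<psi> (UNIV - K n)) \<le> (INF n. \<psi> (UNIV - K n))"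
    using K(1) by (intro INF_mono bexI outer_capacity_le) (auto intro: compact_imp_closed)
  with \<psi> show "(INF n. outer_capacity \<psi> (UNIV - K n)) = 0"
    by simp
qed (use K in auto)

section \<open>Discounted hitting at rational times\<close>

text \<open>For continuous paths and open \<open>G\<close> this agrees with \<open>exp_neg \<alpha> (hitting_time X G \<omega>)\<close>,
  and unlike the latter it is measurable in \<open>\<omega>\<close>.\<close>
definition rat_hitting_discount :: "real \<Rightarrow> (real \<Rightarrow> 'w \<Rightarrow> 'a) \<Rightarrow> 'a set \<Rightarrow> 'w \<Rightarrow> ennreal" where
  "rat_hitting_discount \<alpha> X G \<omega> = (SUP q \<in> {q \<in> \<rat>. 0 \<le> q \<and> X q \<omega> \<in> G}. ennreal (exp (- \<alpha> * q)))"

lemma rat_hitting_discount_le_1: "0 \<le> \<alpha> \<Longrightarrow> rat_hitting_discount \<alpha> X G \<omega> \<le> 1"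
  unfolding rat_hitting_discount_def by (intro SUP_least) auto

lemma rat_hitting_discount_mono: "G \<subseteq> H \<Longrightarrow> rat_hitting_discount \<alpha> X G \<omega> \<le> rat_hitting_discount \<alpha> X H \<omega>"
  unfolding rat_hitting_discount_def by (intro SUP_subset_mono) auto

lemma rat_hitting_discount_Un:
  "rat_hitting_discount \<alpha> X (G \<union> H) \<omega> = sup (rat_hitting_discount \<alpha> X G \<omega>) (rat_hitting_discount \<alpha> X H \<omega>)"
proof -
  have "{q \<in> \<rat>. 0 \<le> q \<and> X q \<omega> \<in> G \<union> H}
      = {q \<in> \<rat>. 0 \<le> q \<and> X q \<omega> \<in> G} \<union> {q \<in> \<rat>. 0 \<le> q \<and> X q \<omega> \<in> H}"
    by blast
  then show ?thesis
    unfolding rat_hitting_discount_def by (simp only: SUP_union)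
qed

lemma rat_hitting_discount_UN:
  "rat_hitting_discount \<alpha> X (\<Union>n. G n) \<omega> = (SUP n. rat_hitting_discount \<alpha> X (G n) \<omega>)"
proof -
  have "{q \<in> \<rat>. 0 \<le> q \<and> X q \<omega> \<in> (\<Union>n. G n)} = (\<Union>n. {q \<in> \<rat>. 0 \<le> q \<and> X q \<omega> \<in> G n})"
    by blast
  then show ?thesis
    unfolding rat_hitting_discount_def by (simp only: SUP_UNION)
qed

lemma rat_hitting_discount_Un_Int:
  "rat_hitting_discount \<alpha> X (G \<union> H) \<omega> + rat_hitting_discount \<alpha> X (G \<inter> H) \<omega>
    \<le> rat_hitting_discount \<alpha> X G \<omega> + rat_hitting_discount \<alpha> X H \<omega>"
proof -
  have "rat_hitting_discount \<alpha> X (G \<inter> H) \<omega> \<le> inf (rat_hitting_discount \<alpha> X G \<omega>) (rat_hitting_discount \<alpha> X H \<omega>)"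
    by (intro le_infI rat_hitting_discount_mono) auto
  moreover have "sup a b + inf a b = a + b" for a b :: ennreal
    by (cases "a \<le> b") (simp_all add: sup_absorb1 sup_absorb2 inf_absorb1 inf_absorb2 add.commute)
  ultimately show ?thesis
    unfolding rat_hitting_discount_Un by (metis add_left_mono)
qed

lemma borel_measurable_rat_hitting_discount:
  assumes "\<And>q. X q \<in> measurable M borel" "G \<in> sets borel"
  shows "rat_hitting_discount \<alpha> X G \<in> borel_measurable M"
proof -
  have "rat_hitting_discount \<alpha> X G
      = (\<lambda>\<omega>. SUP q \<in> \<rat> \<inter> {0..}. if X q \<omega> \<in> G then ennreal (exp (- \<alpha> * q)) else 0)"
    unfolding rat_hitting_discount_def
  proof (intro ext antisym; rule SUP_least)
    fix \<omega> and q :: real assume "q \<in> {q \<in> \<rat>. 0 \<le> q \<and> X q \<omega> \<in> G}"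
    then show "ennreal (exp (- \<alpha> * q))
        \<le> (SUP q \<in> \<rat> \<inter> {0..}. if X q \<omega> \<in> G then ennreal (exp (- \<alpha> * q)) else 0)"
      by (intro SUP_upper2[of q]) auto
  next
    fix \<omega> and q :: real assume "q \<in> \<rat> \<inter> {0..}"
    then show "(if X q \<omega> \<in> G then ennreal (exp (- \<alpha> * q)) else 0)
        \<le> (SUP q \<in> {q \<in> \<rat>. 0 \<le> q \<and> X q \<omega> \<in> G}. ennreal (exp (- \<alpha> * q)))"
      by (auto intro: SUP_upper)
  qed
  moreover have "(\<lambda>\<omega>. SUP q \<in> \<rat> \<inter> {0..}. if X q \<omega> \<in> G then ennreal (exp (- \<alpha> * q)) else 0)
      \<in> borel_measurable M"
    using countable_rat assms by (intro borel_measurable_SUP) (auto intro!: measurable_If)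
  ultimately show ?thesis
    by (simp only:)
qed

lemma hitting_time_nonneg: "0 \<le> hitting_time X G \<omega>"
  unfolding hitting_time_def by (intro Inf_greatest) auto

lemma hitting_time_le: "0 \<le> t \<Longrightarrow> X t \<omega> \<in> G \<Longrightarrow> hitting_time X G \<omega> \<le> ereal t"
  unfolding hitting_time_def by (intro Inf_lower) auto

lemma rat_hitting_discount_le_exp_neg_hitting_time:
  assumes "0 \<le> \<alpha>"
  shows "rat_hitting_discount \<alpha> X G \<omega> \<le> exp_neg \<alpha> (hitting_time X G \<omega>)"
  unfolding rat_hitting_discount_def
proof (rule SUP_least, clarify)
  fix q :: real assume "q \<in> \<rat>" "0 \<le> q" "X q \<omega> \<in> G"
  then obtain d where "hitting_time X G \<omega> = ereal d" "d \<le> q"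
    using hitting_time_nonneg[of X G \<omega>] hitting_time_le[of q X \<omega> G]
    by (cases "hitting_time X G \<omega>") auto
  then show "ennreal (exp (- \<alpha> * q)) \<le> exp_neg \<alpha> (hitting_time X G \<omega>)"
    using assms by (simp add: exp_neg_def ennreal_leI mult_left_mono)
qed

lemma rational_time_in_open:
  fixes f :: "real \<Rightarrow> 'a::topological_space"
  assumes f: "continuous_on {0..} f" and G: "open G" and t: "0 \<le> t" "f t \<in> G" "t < r"
  obtains q where "q \<in> \<rat>" "t < q" "q < r" "f q \<in> G"
proof -
  obtain U where U: "open U" "U \<inter> {0..} = f -` G \<inter> {0..}"
    using f G continuous_on_open_invariant by metis
  with t have "t \<in> U"
    by auto
  then obtain \<delta> where \<delta>: "\<delta> > 0" "ball t \<delta> \<subseteq> U"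
    using U(1) open_contains_ball by blast
  obtain q where q: "q \<in> \<rat>" "t < q" "q < min r (t + \<delta>)"
    using Rats_dense_in_real[of t "min r (t + \<delta>)"] t(3) \<delta>(1) by auto
  then have "q \<in> U \<inter> {0..}"
    using \<delta>(2) t(1) by (auto simp: dist_real_def subset_iff)
  with U(2) q show thesis
    using that by auto
qed

lemma exp_neg_hitting_time_le_rat_hitting_discount:
  assumes "0 \<le> \<alpha>" "open G" "continuous_on {0..} (\<lambda>t. X t \<omega>)"
  shows "exp_neg \<alpha> (hitting_time X G \<omega>) \<le> rat_hitting_discount \<alpha> X G \<omega>"
proof (cases "hitting_time X G \<omega>")
  case (real d)
  have below: "ennreal (exp (- \<alpha> * r)) \<le> rat_hitting_discount \<alpha> X G \<omega>" if r: "d < r" for r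
  proof -
    have "Inf {ereal t | t. 0 \<le> t \<and> X t \<omega> \<in> G} < ereal r"
      using real r unfolding hitting_time_def by simp
    then obtain t where t: "0 \<le> t" "X t \<omega> \<in> G" "t < r"
      by (auto simp: Inf_less_iff)
    then obtain q where q: "q \<in> \<rat>" "t < q" "q < r" "X q \<omega> \<in> G"
      using rational_time_in_open[OF assms(3,2)] by blast
    then have "ennreal (exp (- \<alpha> * q)) \<le> rat_hitting_discount \<alpha> X G \<omega>"
      unfolding rat_hitting_discount_def using t(1) by (intro SUP_upper) auto
    moreover have "exp (- \<alpha> * r) \<le> exp (- \<alpha> * q)"
      using assms(1) q(3) by (simp add: mult_left_mono)
    ultimately show ?thesis
      by (meson ennreal_leI order_trans)
  qed
  have "((\<lambda>r. ennreal (exp (- \<alpha> * r))) \<longlongrightarrow> ennreal (exp (- \<alpha> * d))) (at_right d)"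
    by (intro tendsto_ennrealI tendsto_intros)
  then have "ennreal (exp (- \<alpha> * d)) \<le> rat_hitting_discount \<alpha> X G \<omega>"
    by (rule tendsto_le[OF trivial_limit_at_right_real tendsto_const])
      (rule eventually_mono[OF eventually_at_right_less below])
  then show ?thesis
    using real by (simp add: exp_neg_def)
qed (use hitting_time_nonneg[of X G \<omega>] in \<open>auto simp: exp_neg_def\<close>)

lemma INF_rat_hitting_discount_Compl_cball:
  fixes X :: "real \<Rightarrow> 'w \<Rightarrow> 'a::real_normed_vector"
  assumes "0 < \<alpha>" and X: "continuous_on {0..} (\<lambda>t. X t \<omega>)"
  shows "(INF n. rat_hitting_discount \<alpha> X (UNIV - cball 0 (real n)) \<omega>) = 0"
proof -
  have bound: "(INF n. rat_hitting_discount \<alpha> X (UNIV - cball 0 (real n)) \<omega>) \<le> ennreal (exp (- \<alpha> * T))"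
    for T
  proof -
    have "bounded ((\<lambda>t. X t \<omega>) ` {0..T})"
      using X by (intro compact_imp_bounded compact_continuous_image) (auto intro: continuous_on_subset)
    then obtain B where B: "\<And>t. t \<in> {0..T} \<Longrightarrow> norm (X t \<omega>) \<le> B"
      by (force simp: bounded_iff)
    obtain n :: nat where "B \<le> real n"
      using real_arch_simple by blast
    with B have n: "\<And>t. t \<in> {0..T} \<Longrightarrow> norm (X t \<omega>) \<le> real n"
      by force
    have "rat_hitting_discount \<alpha> X (UNIV - cball 0 (real n)) \<omega> \<le> ennreal (exp (- \<alpha> * T))"
      unfolding rat_hitting_discount_def
    proof (rule SUP_least)
      fix q :: real assume "q \<in> {q \<in> \<rat>. 0 \<le> q \<and> X q \<omega> \<in> UNIV - cball 0 (real n)}"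
      then have "\<not> norm (X q \<omega>) \<le> real n" "0 \<le> q"
        by auto
      then have "T < q"
        using n[of q] by (meson atLeastAtMost_iff not_le)
      then show "ennreal (exp (- \<alpha> * q)) \<le> ennreal (exp (- \<alpha> * T))"
        using \<open>0 < \<alpha>\<close> by (intro ennreal_leI) simp
    qed
    then show ?thesis
      by (rule INF_lower2[OF UNIV_I])
  qed
  have "((\<lambda>T. ennreal (exp (- \<alpha> * T))) \<longlongrightarrow> ennreal 0) at_top"
    using \<open>0 < \<alpha>\<close>
    by (intro tendsto_ennrealI filterlim_compose[OF exp_at_bot]
        filterlim_tendsto_neg_mult_at_bot[OF tendsto_const _ filterlim_ident]) simp
  then have "(INF n. rat_hitting_discount \<alpha> X (UNIV - cball 0 (real n)) \<omega>) \<le> ennreal 0"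
    by (rule tendsto_le[OF trivial_limit_at_top_linorder _ tendsto_const])
      (intro always_eventually allI bound)
  then show ?thesis
    by simp
qed

section \<open>Hitting capacities of mixtures of path laws\<close>

lemma choquet_capacity_outer_rat_hitting:
  fixes X :: "real \<Rightarrow> 'w \<Rightarrow> 'a::t2_space"
  assumes P: "finite_measure P" and X: "\<And>q. X q \<in> measurable P borel" and "0 \<le> \<alpha>"
  shows "choquet_capacity (outer_capacity (\<lambda>G. \<integral>\<^sup>+\<omega>. rat_hitting_discount \<alpha> X G \<omega> \<partial>P))"
proof (rule choquet_capacity_outer_capacity)
  have meas: "rat_hitting_discount \<alpha> X G \<in> borel_measurable P" if "open G" for G
    using X that by (intro borel_measurable_rat_hitting_discount borel_open)
  have "(\<integral>\<^sup>+\<omega>. rat_hitting_discount \<alpha> X UNIV \<omega> \<partial>P) \<le> (\<integral>\<^sup>+\<omega>. 1 \<partial>P)"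
    by (intro nn_integral_mono rat_hitting_discount_le_1 \<open>0 \<le> \<alpha>\<close>)
  also have "\<dots> < \<infinity>"
    using finite_measure.emeasure_finite[OF P, of "space P"] by (simp add: top.not_eq_extremum)
  finally show "(\<integral>\<^sup>+\<omega>. rat_hitting_discount \<alpha> X UNIV \<omega> \<partial>P) \<noteq> \<infinity>"
    by simp
  show "(\<integral>\<^sup>+\<omega>. rat_hitting_discount \<alpha> X (G \<union> H) \<omega> \<partial>P) + (\<integral>\<^sup>+\<omega>. rat_hitting_discount \<alpha> X (G \<inter> H) \<omega> \<partial>P)
      \<le> (\<integral>\<^sup>+\<omega>. rat_hitting_discount \<alpha> X G \<omega> \<partial>P) + (\<integral>\<^sup>+\<omega>. rat_hitting_discount \<alpha> X H \<omega> \<partial>P)"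
    if "open G" "open H" for G H
  proof -
    have "(\<integral>\<^sup>+\<omega>. rat_hitting_discount \<alpha> X (G \<union> H) \<omega> \<partial>P) + (\<integral>\<^sup>+\<omega>. rat_hitting_discount \<alpha> X (G \<inter> H) \<omega> \<partial>P)
        = (\<integral>\<^sup>+\<omega>. rat_hitting_discount \<alpha> X (G \<union> H) \<omega> + rat_hitting_discount \<alpha> X (G \<inter> H) \<omega> \<partial>P)"
      using that by (intro nn_integral_add[symmetric] meas) auto
    also have "\<dots> \<le> (\<integral>\<^sup>+\<omega>. rat_hitting_discount \<alpha> X G \<omega> + rat_hitting_discount \<alpha> X H \<omega> \<partial>P)"
      by (intro nn_integral_mono rat_hitting_discount_Un_Int)
    also have "\<dots> = (\<integral>\<^sup>+\<omega>. rat_hitting_discount \<alpha> X G \<omega> \<partial>P) + (\<integral>\<^sup>+\<omega>. rat_hitting_discount \<alpha> X H \<omega> \<partial>P)"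
      using that by (intro nn_integral_add meas)
    finally show ?thesis .
  qed
  show "(\<integral>\<^sup>+\<omega>. rat_hitting_discount \<alpha> X (\<Union>n. G n) \<omega> \<partial>P)
      \<le> (SUP n. \<integral>\<^sup>+\<omega>. rat_hitting_discount \<alpha> X (G n) \<omega> \<partial>P)"
    if "\<And>n. open (G n)" "incseq G" for G
  proof -
    have "incseq (\<lambda>n. rat_hitting_discount \<alpha> X (G n))"
      using \<open>incseq G\<close> by (auto simp: incseq_def le_fun_def intro: rat_hitting_discount_mono)
    then show ?thesis
      unfolding rat_hitting_discount_UN using that(1)
      by (simp add: meas nn_integral_monotone_convergence_SUP)
  qed
qed

text \<open>The integrand on the left need not be measurable, so \<open>nn_integral_bind\<close> cannot be used
  for it directly; instead every simple function below it is compared with \<open>g\<close>.\<close>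
lemma nn_integral_bind_mono_AE:
  assumes N: "N \<in> measurable M (subprob_algebra B)" and "space M \<noteq> {}"
    and g: "g \<in> borel_measurable B"
    and le: "AE x in M. AE y in N x. f y \<le> g y"
  shows "(\<integral>\<^sup>+y. f y \<partial>(M \<bind> N)) \<le> (\<integral>\<^sup>+y. g y \<partial>(M \<bind> N))"
  unfolding nn_integral_def[of _ f]
proof (rule SUP_least, clarify)
  fix s assume s: "simple_function (M \<bind> N) s" "s \<le> f"
  have "sets (M \<bind> N) = sets B"
    using sets_kernel[OF N] \<open>space M \<noteq> {}\<close> by (rule sets_bind)
  then have s_meas: "s \<in> borel_measurable B"
    using borel_measurable_simple_function[OF s(1)] measurable_cong_sets by blast
  have "AE x in M. (\<integral>\<^sup>+y. s y \<partial>N x) \<le> (\<integral>\<^sup>+y. g y \<partial>N x)"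
    using le by eventually_elim (use s(2) in \<open>auto intro!: nn_integral_mono_AE elim!: AE_mp dest: le_funD intro: order_trans\<close>)
  then have "(\<integral>\<^sup>+x. \<integral>\<^sup>+y. s y \<partial>N x \<partial>M) \<le> (\<integral>\<^sup>+x. \<integral>\<^sup>+y. g y \<partial>N x \<partial>M)"
    by (rule nn_integral_mono_AE)
  then show "integral\<^sup>S (M \<bind> N) s \<le> (\<integral>\<^sup>+y. g y \<partial>(M \<bind> N))"
    using s(1) by (simp add: nn_integral_eq_simple_integral[symmetric] nn_integral_bind[OF s_meas N]
        nn_integral_bind[OF g N])
qed

lemma cap_alpha_bind_eq_outer_capacity:
  fixes X :: "real \<Rightarrow> 'w \<Rightarrow> 'a::topological_space"
  assumes K: "K \<in> measurable M (subprob_algebra \<Omega>)" "space M \<noteq> {}"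
    and X: "\<And>q. X q \<in> measurable \<Omega> borel" and "0 \<le> \<alpha>"
    and cont: "AE x in M. AE \<omega> in K x. continuous_on {0..} (\<lambda>t. X t \<omega>)"
  shows "cap_alpha \<alpha> (M \<bind> K) X = outer_capacity (\<lambda>G. \<integral>\<^sup>+\<omega>. rat_hitting_discount \<alpha> X G \<omega> \<partial>(M \<bind> K))"
  unfolding cap_alpha_def outer_capacity_def
proof (intro ext INF_cong refl)
  fix A G :: "'a set" assume "G \<in> {G. open G \<and> A \<subseteq> G}"
  then have "open G"
    by simp
  have "AE x in M. AE \<omega> in K x. exp_neg \<alpha> (hitting_time X G \<omega>) \<le> rat_hitting_discount \<alpha> X G \<omega>"
    using cont by eventually_elim
      (auto elim!: AE_mp intro: exp_neg_hitting_time_le_rat_hitting_discount \<open>0 \<le> \<alpha>\<close> \<open>open G\<close>)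
  with K borel_measurable_rat_hitting_discount[OF X borel_open[OF \<open>open G\<close>]]
  have "(\<integral>\<^sup>+\<omega>. exp_neg \<alpha> (hitting_time X G \<omega>) \<partial>(M \<bind> K)) \<le> (\<integral>\<^sup>+\<omega>. rat_hitting_discount \<alpha> X G \<omega> \<partial>(M \<bind> K))"
    by (rule nn_integral_bind_mono_AE)
  moreover have "(\<integral>\<^sup>+\<omega>. rat_hitting_discount \<alpha> X G \<omega> \<partial>(M \<bind> K)) \<le> (\<integral>\<^sup>+\<omega>. exp_neg \<alpha> (hitting_time X G \<omega>) \<partial>(M \<bind> K))"
    by (intro nn_integral_mono rat_hitting_discount_le_exp_neg_hitting_time \<open>0 \<le> \<alpha>\<close>)
  ultimately show "(\<integral>\<^sup>+\<omega>. exp_neg \<alpha> (hitting_time X G \<omega>) \<partial>(M \<bind> K)) = (\<integral>\<^sup>+\<omega>. rat_hitting_discount \<alpha> X G \<omega> \<partial>(M \<bind> K))"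
    by (rule antisym)
qed

lemma INF_nn_integral_rat_hitting_discount_Compl_cball:
  fixes X :: "real \<Rightarrow> 'w \<Rightarrow> 'a::real_normed_vector"
  assumes K: "K \<in> measurable M (subprob_algebra \<Omega>)" "space M \<noteq> {}" and "finite_measure (M \<bind> K)"
    and X: "\<And>q. X q \<in> measurable \<Omega> borel" and "0 < \<alpha>"
    and cont: "AE x in M. AE \<omega> in K x. continuous_on {0..} (\<lambda>t. X t \<omega>)"
  shows "(INF n. \<integral>\<^sup>+\<omega>. rat_hitting_discount \<alpha> X (UNIV - cball 0 (real n)) \<omega> \<partial>(M \<bind> K)) = 0"
proof -
  define f where "f n = rat_hitting_discount \<alpha> X (UNIV - cball 0 (real n))" for n
  have f_meas: "f n \<in> borel_measurable \<Omega>" for n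
    unfolding f_def using X by (intro borel_measurable_rat_hitting_discount) auto
  moreover have "sets (M \<bind> K) = sets \<Omega>"
    using sets_kernel[OF K(1)] K(2) by (rule sets_bind)
  ultimately have f_meas': "f n \<in> borel_measurable (M \<bind> K)" for n
    by (simp cong: measurable_cong_sets)
  have "decseq f"
    unfolding f_def by (intro decseq_SucI le_funI rat_hitting_discount_mono) auto
  have "(\<integral>\<^sup>+\<omega>. f 0 \<omega> \<partial>(M \<bind> K)) \<le> (\<integral>\<^sup>+\<omega>. 1 \<partial>(M \<bind> K))"
    unfolding f_def using \<open>0 < \<alpha>\<close> by (intro nn_integral_mono rat_hitting_discount_le_1) simp
  also have "\<dots> < \<infinity>"
    using finite_measure.emeasure_finite[OF \<open>finite_measure (M \<bind> K)\<close>] by (simp add: top.not_eq_extremum)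
  finally have "(INF n. \<integral>\<^sup>+\<omega>. f n \<omega> \<partial>(M \<bind> K)) = (\<integral>\<^sup>+\<omega>. (INF n. f n \<omega>) \<partial>(M \<bind> K))"
    using \<open>decseq f\<close> f_meas' by (intro nn_integral_monotone_convergence_INF_decseq[symmetric])
  also have "\<dots> \<le> (\<integral>\<^sup>+\<omega>. 0 \<partial>(M \<bind> K))"
    using K(1,2) borel_measurable_const
  proof (rule nn_integral_bind_mono_AE)
    show "AE x in M. AE \<omega> in K x. (INF n. f n \<omega>) \<le> 0"
      using cont unfolding f_def
      by eventually_elim (auto elim!: AE_mp intro: INF_rat_hitting_discount_Compl_cball[OF \<open>0 < \<alpha>\<close>])
  qed
  finally show ?thesis
    by (simp add: f_def)
qed

lemma choquet_tight_cap_alpha_bind: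
  fixes X :: "real \<Rightarrow> 'w \<Rightarrow> 'a::{real_normed_vector, heine_borel}"
  assumes M: "prob_space M" and K: "K \<in> measurable M (subprob_algebra \<Omega>)" "\<And>x. prob_space (K x)"
    and X: "\<And>q. X q \<in> measurable \<Omega> borel" and "0 < \<alpha>"
    and cont: "AE x in M. AE \<omega> in K x. continuous_on {0..} (\<lambda>t. X t \<omega>)"
  shows "choquet_capacity (cap_alpha \<alpha> (M \<bind> K) X) \<and> tight_capacity (cap_alpha \<alpha> (M \<bind> K) X)"
proof -
  have "space M \<noteq> {}"
    using M by (rule prob_space.not_empty)
  have "finite_measure (M \<bind> K)"
    using M K by (intro prob_space.axioms(1) prob_space.prob_space_bind) auto
  have "sets (M \<bind> K) = sets \<Omega>"
    using sets_kernel[OF K(1)] \<open>space M \<noteq> {}\<close> by (rule sets_bind)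
  then have X_meas: "X q \<in> measurable (M \<bind> K) borel" for q
    using X by (simp cong: measurable_cong_sets)
  have cap: "cap_alpha \<alpha> (M \<bind> K) X = outer_capacity (\<lambda>G. \<integral>\<^sup>+\<omega>. rat_hitting_discount \<alpha> X G \<omega> \<partial>(M \<bind> K))"
    using K(1) \<open>space M \<noteq> {}\<close> X \<open>0 < \<alpha>\<close> cont by (intro cap_alpha_bind_eq_outer_capacity) auto
  have "choquet_capacity (cap_alpha \<alpha> (M \<bind> K) X)"
    unfolding cap using \<open>finite_measure (M \<bind> K)\<close> X_meas \<open>0 < \<alpha>\<close>
    by (intro choquet_capacity_outer_rat_hitting) auto
  moreover have "tight_capacity (cap_alpha \<alpha> (M \<bind> K) X)"
    unfolding cap
  proof (rule tight_capacity_outer_capacity)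
    show "(INF n. \<integral>\<^sup>+\<omega>. rat_hitting_discount \<alpha> X (UNIV - cball 0 (real n)) \<omega> \<partial>(M \<bind> K)) = 0"
      using K(1) \<open>space M \<noteq> {}\<close> \<open>finite_measure (M \<bind> K)\<close> X \<open>0 < \<alpha>\<close> cont
      by (rule INF_nn_integral_rat_hitting_discount_Compl_cball)
  qed (auto simp: incseq_def)
  ultimately show ?thesis ..
qed

theorem corollary5p6:
  fixes \<mu> :: "real \<Rightarrow> 'a::euclidean_space measure"
    and u :: "real \<Rightarrow> 'a \<Rightarrow> real"
    and E :: "(real \<times> 'a) set"
    and \<Omega> :: "'w measure"
    and Pk :: "real \<Rightarrow> 'a \<Rightarrow> 'w measure"
    and X1 :: "real \<Rightarrow> 'w \<Rightarrow> real"
    and X2 :: "real \<Rightarrow> 'w \<Rightarrow> 'a"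
    and \<alpha> :: real
  assumes mu_prob: "\<And>t. t \<ge> 0 \<Longrightarrow> prob_space (\<mu> t) \<and> sets (\<mu> t) = sets borel"
    and mu_density: "\<And>t. t \<ge> 0 \<Longrightarrow> \<mu> t = density lborel (\<lambda>x. ennreal (u t x))"
    and u_meas: "(\<lambda>(t, x). u t x) \<in> borel_measurable borel"
    and mu_weak: "weakly_continuous_flow \<mu>"
    and E_borel: "E \<in> sets borel"
    and E_full: "\<And>s. s \<ge> 0 \<Longrightarrow> emeasure (\<mu> s) {x. (s, x) \<in> E} = 1"
    and E_sub: "E \<subseteq> {0..} \<times> UNIV"
    and Pk_prob: "\<And>s x. prob_space (Pk s x) \<and> sets (Pk s x) = sets \<Omega>"
    and Pk_kernel: "\<And>s. s \<ge> 0 \<Longrightarrow> Pk s \<in> measurable borel (subprob_algebra \<Omega>)"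
    and X1_meas: "\<And>t. X1 t \<in> measurable \<Omega> borel"
    and X2_meas: "\<And>t. X2 t \<in> measurable \<Omega> borel"
    and X_in_E: "\<And>s x. (s, x) \<in> E \<Longrightarrow>
        AE \<omega> in Pk s x. \<forall>t\<ge>0. (X1 t \<omega>, X2 t \<omega>) \<in> E"
    and X_cont: "\<And>s x. (s, x) \<in> E \<Longrightarrow>
        AE \<omega> in Pk s x. continuous_on {0..} (\<lambda>t. (X1 t \<omega>, X2 t \<omega>))"
    and X1_time: "\<And>s x t. (s, x) \<in> E \<Longrightarrow> t \<ge> 0 \<Longrightarrow> AE \<omega> in Pk s x. X1 t \<omega> = s + t"
    and X_marg: "\<And>s t. s \<ge> 0 \<Longrightarrow> t \<ge> 0 \<Longrightarrow>
        distr (\<mu> s \<bind> Pk s) borel (X2 t) = \<mu> (s + t)"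
    and alpha_pos: "\<alpha> > 0"
  shows "choquet_capacity (cap_alpha \<alpha> (\<mu> 0 \<bind> Pk 0) X2)
       \<and> tight_capacity (cap_alpha \<alpha> (\<mu> 0 \<bind> Pk 0) X2)"
proof -
  have \<mu>0: "prob_space (\<mu> 0)" "sets (\<mu> 0) = sets borel"
    using mu_prob[of 0] by auto
  have "(\<lambda>x. (0::real, x)) \<in> borel_measurable (borel :: 'a measure)"
    by (intro borel_measurable_continuous_onI continuous_intros)
  then have "{x. (0, x) \<in> E} \<in> sets (\<mu> 0)"
    using measurable_sets[OF _ E_borel, of "\<lambda>x. (0, x)" borel] by (simp add: \<mu>0(2) vimage_def)
  then have "AE x in \<mu> 0. x \<in> {x. (0, x) \<in> E}"
    using E_full[of 0] by (subst prob_space.AE_in_set_eq_1[OF \<mu>0(1)]) (auto simp: measure_def)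
  moreover have "AE \<omega> in Pk 0 x. continuous_on {0..} (\<lambda>t. X2 t \<omega>)" if "(0, x) \<in> E" for x
    using X_cont[OF that] by eventually_elim (drule continuous_on_snd, simp)
  ultimately have "AE x in \<mu> 0. AE \<omega> in Pk 0 x. continuous_on {0..} (\<lambda>t. X2 t \<omega>)"
    by (auto elim: eventually_mono)
  moreover have "Pk 0 \<in> measurable (\<mu> 0) (subprob_algebra \<Omega>)"
    using Pk_kernel[of 0] \<mu>0(2) by (simp cong: measurable_cong_sets)
  ultimately show ?thesis
    using \<mu>0(1) Pk_prob X2_meas alpha_pos by (intro choquet_tight_cap_alpha_bind) auto
qed

end
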